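(* Let $(\mathcal{A}_\Lambda,\partial_\Lambda)$ and $(\mathcal{A}'_\Lambda,\partial'_\Lambda)$ be filtered Chekanov–Eliashberg DGAs generated by $q_1,\dots,q_n$ and $q_1',\dots,q_n'$ with height filtrations $h,h'$. Let $\bar\phi:(\mathcal{A}_\Lambda,\partial_\Lambda)\to(\mathcal{A}_\Lambda,\partial_\Lambda)$ be a composition of semimonotonic elementary automorphisms, and let $\sigma:\mathcal{A}_\Lambda\to\mathcal{A}'_\Lambda$, $\sigma(q_i)=q_i'$, be a DGA isomorphism such that $\delta\ge\max_i|h'(\sigma(q_i))-h(q_i)|$. Let $\epsilon$ be an augmentation of $\mathcal{A}_\Lambda$ and $\epsilon'=\epsilon\circ\phi^{-1}$. Then $\phi=\sigma\circ\bar\phi$ induces a $2\delta$-interleaving \[ (\phi_1^{\epsilon,\bullet})_\ast: F^\bullet\mathrm{LCH}^\epsilon_\ast(\Lambda)\to F^{\bullet+\delta}\mathrm{LCH}^{\epsilon'}_\ast(\Lambda'). \]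
   Context: A filtered Chekanov–Eliashberg DGA is a Chekanov–Eliashberg DGA (free noncommutative graded algebra over $\mathbb{Z}_2$ on generators, with differential) together with heights $h(q_i)>0$, extended by $h(\text{word})=$ sum of letter heights and $h(\text{sum})=$ max, such that the differential strictly decreases height. An augmentation is an algebra map to $\mathbb{Z}_2$ vanishing in nonzero degrees and killing the image of the differential; $\partial_1^\epsilon$ is the linearized differential on the vector space spanned by the generators. $F^\bullet\mathrm{LCH}^\epsilon_\ast(\Lambda)$ is the persistence module $t\mapsto H_\ast(A^t,\partial_1^\epsilon)$, where $A^t$ is spanned by generators of height $\le t$, with transfer maps induced by inclusion. An elementary automorphism is a chain map $q_j\mapsto q_j+u$, $q_i\mapsto q_i$ ($i\ne j$), $u$ not involving $q_j$; it is semimonotonic if $u$ is a (sum of) word(s) in generators of height strictly less than $h(q_j)$. A $2\delta$-interleaving of persistence modules $U^\bullet,V^\bullet$ consists of maps $\varphi^t:U^t\to V^{t+\delta}$, $\psi^t:V^t\to U^{t+\delta}$ commuting with transfer maps, with $\psi^{t+\delta}\varphi^t$ and $\varphi^{t+\delta}\psi^t$ equal to the transfer maps from $t$ to $t+2\delta$. *)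

theory Defs
  imports Complex_Main
begin

(* Free noncommutative algebra over Z_2 on generators q_0,...,q_{n-1} (indices < n).
   A word is a list of generator indices; an element is a finite set of words
   (Z_2 coefficients, so addition is symmetric difference). *)

type_synonym word = "nat list"
type_synonym elt = "word set"

definition zadd :: "'a set \<Rightarrow> 'a set \<Rightarrow> 'a set" where
  "zadd A B = (A - B) \<union> (B - A)"

definition zsum :: "'i set \<Rightarrow> ('i \<Rightarrow> 'a set) \<Rightarrow> 'a set" where
  "zsum I X = {y. odd (card {i \<in> I. y \<in> X i})}"

definition mult :: "elt \<Rightarrow> elt \<Rightarrow> elt" where
  "mult A B = zsum (A \<times> B) (\<lambda>(u, v). {u @ v})"

(* algebra map determined by images of the generators *)
fun word_eval :: "(nat \<Rightarrow> elt) \<Rightarrow> word \<Rightarrow> elt" where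
  "word_eval f [] = {[]}"
| "word_eval f (x # w) = mult (f x) (word_eval f w)"

definition eval :: "(nat \<Rightarrow> elt) \<Rightarrow> elt \<Rightarrow> elt" where
  "eval f A = zsum A (word_eval f)"

(* derivation (Leibniz rule, signs irrelevant over Z_2) determined by values on generators *)
fun dword :: "(nat \<Rightarrow> elt) \<Rightarrow> word \<Rightarrow> elt" where
  "dword d [] = {}"
| "dword d (x # w) = zadd (mult (d x) {w}) (mult {[x]} (dword d w))"

definition dext :: "(nat \<Rightarrow> elt) \<Rightarrow> elt \<Rightarrow> elt" where
  "dext d A = zsum A (dword d)"

definition wdeg :: "(nat \<Rightarrow> int) \<Rightarrow> word \<Rightarrow> int" where
  "wdeg g w = sum_list (map g w)"

definition wht :: "(nat \<Rightarrow> real) \<Rightarrow> word \<Rightarrow> real" where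
  "wht h w = sum_list (map h w)"

(* filtered Chekanov-Eliashberg DGA on generators 0..n-1 with grading g, height h,
   differential d (given on generators) *)
definition filtered_ce_dga :: "nat \<Rightarrow> (nat \<Rightarrow> int) \<Rightarrow> (nat \<Rightarrow> real) \<Rightarrow> (nat \<Rightarrow> elt) \<Rightarrow> bool" where
  "filtered_ce_dga n g h d \<longleftrightarrow>
     (\<forall>i<n. h i > 0) \<and>
     (\<forall>i<n. finite (d i) \<and>
        (\<forall>w\<in>d i. set w \<subseteq> {..<n} \<and> wdeg g w = g i - 1 \<and> wht h w < h i)) \<and>
     (\<forall>i<n. dext d (d i) = {})"

definition dga_map :: "nat \<Rightarrow> (nat \<Rightarrow> int) \<Rightarrow> (nat \<Rightarrow> elt) \<Rightarrow> (nat \<Rightarrow> int) \<Rightarrow> (nat \<Rightarrow> elt)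
    \<Rightarrow> (nat \<Rightarrow> elt) \<Rightarrow> bool" where
  "dga_map n g d g' d' f \<longleftrightarrow>
     (\<forall>i<n. finite (f i) \<and> (\<forall>w\<in>f i. set w \<subseteq> {..<n} \<and> wdeg g' w = g i) \<and>
        dext d' (f i) = eval f (d i))"

definition gen :: "nat \<Rightarrow> elt" where
  "gen i = {[i]}"

definition comp :: "(nat \<Rightarrow> elt) \<Rightarrow> (nat \<Rightarrow> elt) \<Rightarrow> nat \<Rightarrow> elt" where
  "comp f g = (\<lambda>i. eval f (g i))"

definition elem_map :: "nat \<Rightarrow> elt \<Rightarrow> nat \<Rightarrow> elt" where
  "elem_map j u = (\<lambda>i. if i = j then zadd {[j]} u else {[i]})"

definition elem_aut :: "nat \<Rightarrow> (nat \<Rightarrow> int) \<Rightarrow> (nat \<Rightarrow> elt) \<Rightarrow> nat \<Rightarrow> elt \<Rightarrow> bool" where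
  "elem_aut n g d j u \<longleftrightarrow>
     j < n \<and> finite u \<and> (\<forall>w\<in>u. set w \<subseteq> {..<n} - {j}) \<and>
     dga_map n g d g d (elem_map j u)"

definition semimonotonic :: "(nat \<Rightarrow> real) \<Rightarrow> nat \<Rightarrow> elt \<Rightarrow> bool" where
  "semimonotonic h j u \<longleftrightarrow> (\<forall>w\<in>u. \<forall>x\<in>set w. h x < h j)"

definition compose_elem :: "(nat \<times> elt) list \<Rightarrow> nat \<Rightarrow> elt" where
  "compose_elem fs = foldr (\<lambda>(j, u) acc. comp (elem_map j u) acc) fs gen"

(* augmentation given by its values on generators (True = 1) *)
definition aug :: "(nat \<Rightarrow> bool) \<Rightarrow> elt \<Rightarrow> bool" where
  "aug e A = odd (card {w \<in> A. \<forall>x\<in>set w. e x})"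

definition augmentation :: "nat \<Rightarrow> (nat \<Rightarrow> int) \<Rightarrow> (nat \<Rightarrow> elt) \<Rightarrow> (nat \<Rightarrow> bool) \<Rightarrow> bool" where
  "augmentation n g d e \<longleftrightarrow> (\<forall>i<n. e i \<longrightarrow> g i = 0) \<and> (\<forall>i<n. \<not> aug e (d i))"

(* linear part after conjugation by the augmentation: for a word w,
   sum over positions j of (prod_{l<>j} e(w_l)) w_j *)
definition lin_word :: "(nat \<Rightarrow> bool) \<Rightarrow> word \<Rightarrow> nat set" where
  "lin_word e w = zsum {j. j < length w}
      (\<lambda>j. if (\<forall>l<length w. l \<noteq> j \<longrightarrow> e (w ! l)) then {w ! j} else {})"

definition lin :: "(nat \<Rightarrow> bool) \<Rightarrow> elt \<Rightarrow> nat set" where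
  "lin e A = zsum A (lin_word e)"

(* Z_2-linear extension of a map on generators; vectors = finite sets of generators *)
definition linext :: "(nat \<Rightarrow> nat set) \<Rightarrow> nat set \<Rightarrow> nat set" where
  "linext f V = zsum V f"

definition lin_diff :: "(nat \<Rightarrow> elt) \<Rightarrow> (nat \<Rightarrow> bool) \<Rightarrow> nat set \<Rightarrow> nat set" where
  "lin_diff d e = linext (\<lambda>i. lin e (d i))"

(* linearized map \<phi>_1^\<epsilon> of an algebra map \<phi> w.r.t. target augmentation e' = \<epsilon> \<circ> \<phi>^{-1} *)
definition lin_map :: "(nat \<Rightarrow> elt) \<Rightarrow> (nat \<Rightarrow> bool) \<Rightarrow> nat set \<Rightarrow> nat set" where
  "lin_map f e' = linext (\<lambda>i. lin e' (f i))"

definition filt :: "nat \<Rightarrow> (nat \<Rightarrow> real) \<Rightarrow> real \<Rightarrow> nat set set" where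
  "filt n h t = {V. V \<subseteq> {i. i < n \<and> h i \<le> t}}"

definition homog :: "(nat \<Rightarrow> int) \<Rightarrow> int \<Rightarrow> nat set \<Rightarrow> bool" where
  "homog g k V \<longleftrightarrow> (\<forall>i\<in>V. g i = k)"

definition cyc :: "(nat set \<Rightarrow> nat set) \<Rightarrow> nat \<Rightarrow> (nat \<Rightarrow> real) \<Rightarrow> (nat \<Rightarrow> int)
    \<Rightarrow> real \<Rightarrow> int \<Rightarrow> nat set set" where
  "cyc D n h g t k = {V \<in> filt n h t. homog g k V \<and> D V = {}}"

definition bdy :: "(nat set \<Rightarrow> nat set) \<Rightarrow> nat \<Rightarrow> (nat \<Rightarrow> real) \<Rightarrow> (nat \<Rightarrow> int)
    \<Rightarrow> real \<Rightarrow> int \<Rightarrow> nat set set" where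
  "bdy D n h g t k = {D W | W. W \<in> filt n h t \<and> homog g (k + 1) W}"

(* Homology maps are represented at the level of cycles modulo boundaries:
   \<phi>^t = [F] : H_k(A^t) -> H_k(A'^{t+\<delta>}), and \<psi>^t is represented by \<Psi> t on cycles. *)
definition induces_interleaving ::
  "nat \<Rightarrow> (nat \<Rightarrow> int) \<Rightarrow> (nat \<Rightarrow> real) \<Rightarrow> (nat set \<Rightarrow> nat set)
   \<Rightarrow> (nat \<Rightarrow> int) \<Rightarrow> (nat \<Rightarrow> real) \<Rightarrow> (nat set \<Rightarrow> nat set)
   \<Rightarrow> real \<Rightarrow> (nat set \<Rightarrow> nat set) \<Rightarrow> bool" where
  "induces_interleaving n g h D g' h' D' \<delta> F \<longleftrightarrow>
     \<comment> \<open>F induces well-defined maps \<phi>^t on homology (they commute with transfer maps automatically)\<close>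
     (\<forall>V W. F (zadd V W) = zadd (F V) (F W)) \<and>
     (\<forall>t k. \<forall>z\<in>cyc D n h g t k. F z \<in> cyc D' n h' g' (t + \<delta>) k) \<and>
     (\<forall>t k. \<forall>z\<in>bdy D n h g t k. F z \<in> bdy D' n h' g' (t + \<delta>) k) \<and>
     \<comment> \<open>existence of \<psi>^t : H_k(A'^t) -> H_k(A^{t+\<delta>}) with the interleaving identities\<close>
     (\<exists>\<Psi> :: real \<Rightarrow> nat set \<Rightarrow> nat set.
        (\<forall>t k. \<forall>z\<in>cyc D' n h' g' t k. \<Psi> t z \<in> cyc D n h g (t + \<delta>) k) \<and>
        (\<forall>t k. \<forall>z\<in>cyc D' n h' g' t k. \<forall>w\<in>cyc D' n h' g' t k.
            \<Psi> t (zadd z w) = zadd (\<Psi> t z) (\<Psi> t w)) \<and>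
        (\<forall>t k. \<forall>z\<in>bdy D' n h' g' t k. \<Psi> t z \<in> bdy D n h g (t + \<delta>) k) \<and>
        (\<forall>t s k. t \<le> s \<longrightarrow> (\<forall>z\<in>cyc D' n h' g' t k.
            zadd (\<Psi> s z) (\<Psi> t z) \<in> bdy D n h g (s + \<delta>) k)) \<and>
        (\<forall>t k. \<forall>z\<in>cyc D n h g t k.
            zadd (\<Psi> (t + \<delta>) (F z)) z \<in> bdy D n h g (t + 2 * \<delta>) k) \<and>
        (\<forall>t k. \<forall>z\<in>cyc D' n h' g' t k.
            zadd (F (\<Psi> t z)) z \<in> bdy D' n h' g' (t + 2 * \<delta>) k))"

end

theory Submission
  imports Defs "HOL-Library.Z2"
begin

text \<open>Over \<open>\<int>\<^sub>2\<close> an elementary automorphism \<open>q\<^sub>j \<mapsto> q\<^sub>j + u\<close> with \<open>u\<close> free of \<open>q\<^sub>j\<close> is an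
  involution, so \<open>\<phi>\<close> is invertible and, linearized with respect to \<open>\<epsilon>\<close> and
  \<open>\<epsilon>' = \<epsilon> \<circ> \<phi>\<^sup>-\<^sup>1\<close>, becomes a chain isomorphism of the linearized complexes, by the
  chain rule for linearizations. A generator survives linearization of a word only if all other
  letters are augmented, hence of degree 0; so every letter of \<open>\<phi>\<^sub>1(q\<^sub>i)\<close> has the degree of
  \<open>q\<^sub>i\<close> and, by semimonotonicity, height at most \<open>h(q\<^sub>i)\<close>. The same holds for the inverse,
  so \<open>\<phi>\<^sub>1\<close> is an isomorphism of filtered complexes for the height \<open>h\<close>. Finally \<open>\<sigma>\<close> is the
  identity on generators and only changes heights by at most \<open>\<delta>\<close>, so \<open>\<phi>\<^sub>1\<close> and its inverse
  shift filtration levels by \<open>\<delta>\<close>; as they are mutually inverse on the nose, every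
  interleaving identity holds with zero boundary.\<close>

section \<open>Sums over \<open>\<int>\<^sub>2\<close>\<close>

text \<open>Membership in a \<open>zsum\<close> is computed in the two-element field \<open>bit\<close>, which turns
  identities between \<open>zsum\<close>s into identities between finite sums.\<close>

abbreviation bit_of :: "bool \<Rightarrow> bit" where
  "bit_of b \<equiv> of_bool b"

lemma of_nat_bit_eq_odd: "(of_nat k :: bit) = bit_of (odd k)"
  by (induction k) auto

lemma sum_bit_of_eq_odd_card:
  "finite A \<Longrightarrow> (\<Sum>x\<in>A. bit_of (P x)) = bit_of (odd (card {x\<in>A. P x}))"
  by (simp add: sum_of_bool_eq of_nat_bit_eq_odd Int_def conj_commute)

lemma bit_of_mem_zsum: "finite I \<Longrightarrow> bit_of (y \<in> zsum I X) = (\<Sum>i\<in>I. bit_of (y \<in> X i))"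
  by (simp only: sum_bit_of_eq_odd_card zsum_def mem_Collect_eq)

lemma mem_zadd_iff: "y \<in> zadd A B \<longleftrightarrow> (y \<in> A) \<noteq> (y \<in> B)"
  by (auto simp: zadd_def)

lemma bit_of_neq: "bit_of (a \<noteq> b) = bit_of a + bit_of b"
  by (cases a; cases b) auto

lemma bit_of_mem_zadd: "bit_of (y \<in> zadd A B) = bit_of (y \<in> A) + bit_of (y \<in> B)"
  by (simp add: mem_zadd_iff bit_of_neq)

lemma finite_zadd [simp]: "finite A \<Longrightarrow> finite B \<Longrightarrow> finite (zadd A B)"
  by (simp add: zadd_def)

lemma bit_of_conj: "bit_of (a \<and> b) = bit_of a * bit_of b"
  by (cases a) simp_all

lemma bit_of_mem_if_empty: "bit_of (y \<in> (if b then S else {})) = bit_of b * bit_of (y \<in> S)"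
  by (cases b) simp_all

lemma set_eq_bitI: "(\<And>y. bit_of (y \<in> A) = bit_of (y \<in> B)) \<Longrightarrow> A = B"
  by (rule set_eqI) (metis of_bool_eq_iff)

lemma zsum_subset_UN: "zsum I X \<subseteq> (\<Union>i\<in>I. X i)"
proof
  fix y assume "y \<in> zsum I X"
  then have "odd (card {i\<in>I. y \<in> X i})" by (simp add: zsum_def)
  then have "{i\<in>I. y \<in> X i} \<noteq> {}" by (metis card.empty even_zero)
  then show "y \<in> (\<Union>i\<in>I. X i)" by blast
qed

lemma finite_zsum: "finite I \<Longrightarrow> (\<And>i. i \<in> I \<Longrightarrow> finite (X i)) \<Longrightarrow> finite (zsum I X)"
  by (meson finite_UN_I finite_subset zsum_subset_UN)

lemma sum_subset_eq_sum_bit_of_mult: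
  assumes "finite U" "S \<subseteq> U"
  shows "(\<Sum>j\<in>S. f j) = (\<Sum>j\<in>U. bit_of (j \<in> S) * (f j :: bit))"
proof -
  have "(\<Sum>j\<in>U. bit_of (j \<in> S) * f j) = (\<Sum>j\<in>U \<inter> {j. j \<in> S}. f j)"
    by (rule sum_of_bool_mult_eq[OF assms(1)])
  also have "U \<inter> {j. j \<in> S} = S" using assms by blast
  finally show ?thesis by simp
qed

lemma sum_zadd:
  assumes "finite A" "finite B"
  shows "(\<Sum>j\<in>zadd A B. f j) = (\<Sum>j\<in>A. f j) + (\<Sum>j\<in>B. (f j :: bit))"
proof -
  let ?U = "A \<union> B"
  have "(\<Sum>j\<in>zadd A B. f j) = (\<Sum>j\<in>?U. bit_of (j \<in> zadd A B) * f j)"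
    using assms by (intro sum_subset_eq_sum_bit_of_mult) (auto simp: zadd_def)
  also have "\<dots> = (\<Sum>j\<in>?U. bit_of (j \<in> A) * f j) + (\<Sum>j\<in>?U. bit_of (j \<in> B) * f j)"
    by (simp only: bit_of_mem_zadd distrib_right sum.distrib)
  also have "\<dots> = (\<Sum>j\<in>A. f j) + (\<Sum>j\<in>B. f j)"
    using assms by (simp only: sum_subset_eq_sum_bit_of_mult[of ?U A] sum_subset_eq_sum_bit_of_mult[of ?U B] Un_upper1 Un_upper2 finite_Un)
  finally show ?thesis .
qed

lemma zsum_zsum_index:
  assumes "finite I" "\<And>i. i \<in> I \<Longrightarrow> finite (X i)"
  shows "zsum (zsum I X) Y = zsum I (\<lambda>i. zsum (X i) Y)"
proof (rule set_eq_bitI)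
  fix y
  let ?U = "\<Union>i\<in>I. X i"
  have U: "finite ?U" using assms by blast
  have "bit_of (y \<in> zsum (zsum I X) Y) = (\<Sum>j\<in>zsum I X. bit_of (y \<in> Y j))"
    using assms by (intro bit_of_mem_zsum finite_zsum)
  also have "\<dots> = (\<Sum>j\<in>?U. bit_of (j \<in> zsum I X) * bit_of (y \<in> Y j))"
    using U zsum_subset_UN by (rule sum_subset_eq_sum_bit_of_mult)
  also have "\<dots> = (\<Sum>i\<in>I. \<Sum>j\<in>?U. bit_of (j \<in> X i) * bit_of (y \<in> Y j))"
    using assms by (simp only: bit_of_mem_zsum sum_distrib_right sum.swap[of _ ?U])
  also have "\<dots> = (\<Sum>i\<in>I. \<Sum>j\<in>X i. bit_of (y \<in> Y j))"
    using U by (intro sum.cong refl sum_subset_eq_sum_bit_of_mult[symmetric]) blast+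
  also have "\<dots> = bit_of (y \<in> zsum I (\<lambda>i. zsum (X i) Y))"
    using assms by (simp add: bit_of_mem_zsum)
  finally show "bit_of (y \<in> zsum (zsum I X) Y) = bit_of (y \<in> zsum I (\<lambda>i. zsum (X i) Y))" .
qed

lemma zsum_zadd_index:
  assumes "finite A" "finite B"
  shows "zsum (zadd A B) Y = zadd (zsum A Y) (zsum B Y)"
  by (rule set_eq_bitI) (simp only: assms bit_of_mem_zsum finite_zadd sum_zadd bit_of_mem_zadd)

lemma zsum_empty [simp]: "zsum {} X = {}"
  by (simp add: zsum_def)

lemma zsum_singleton [simp]: "zsum {a} X = X a"
  by (rule set_eq_bitI) (simp add: bit_of_mem_zsum)

lemma zsum_singletons: "zsum A (\<lambda>w. {w}) = A"
proof -
  have "\<And>y. {w \<in> A. y \<in> {w}} = (if y \<in> A then {y} else {})" by auto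
  then show ?thesis by (auto simp: zsum_def)
qed

lemma zsum_cong: "(\<And>i. i \<in> I \<Longrightarrow> X i = Y i) \<Longrightarrow> zsum I X = zsum I Y"
  unfolding zsum_def by (metis (mono_tags, lifting) Collect_cong)

lemma zadd_simps [simp]: "zadd A {} = A" "zadd {} A = A" "zadd A A = {}"
  by (auto simp: zadd_def)

lemma zadd_assoc: "zadd (zadd A B) C = zadd A (zadd B C)"
  by (auto simp: zadd_def)

lemma odd_card_zadd:
  assumes "finite A" "finite B"
  shows "odd (card (zadd A B)) \<longleftrightarrow> odd (card A) \<noteq> odd (card B)"
proof -
  have "bit_of (odd (card S)) = (\<Sum>x\<in>S. bit_of True)" if "finite S" for S :: "'a set"
    using sum_bit_of_eq_odd_card[OF that, of "\<lambda>_. True"] by simp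
  then have "bit_of (odd (card (zadd A B))) = bit_of (odd (card A) \<noteq> odd (card B))"
    using assms by (simp only: finite_zadd sum_zadd bit_of_neq)
  then show ?thesis by (simp only: of_bool_eq_iff)
qed

lemma zsum_zadd_index_finite_fibres:
  assumes "\<And>y. finite {i. y \<in> f i}"
  shows "zsum (zadd V W) f = zadd (zsum V f) (zsum W f)"
proof (rule set_eqI)
  fix y
  let ?K = "{i. y \<in> f i}"
  have mem: "y \<in> zsum S f \<longleftrightarrow> odd (card (S \<inter> ?K))" for S
    unfolding zsum_def by (simp add: Int_def)
  have "zadd V W \<inter> ?K = zadd (V \<inter> ?K) (W \<inter> ?K)" by (auto simp: zadd_def)
  moreover have "finite (V \<inter> ?K)" "finite (W \<inter> ?K)" using assms[of y] by auto
  ultimately have "odd (card (zadd V W \<inter> ?K)) \<longleftrightarrow> odd (card (V \<inter> ?K)) \<noteq> odd (card (W \<inter> ?K))"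
    by (simp only: odd_card_zadd)
  then show "y \<in> zsum (zadd V W) f \<longleftrightarrow> y \<in> zadd (zsum V f) (zsum W f)"
    by (simp only: mem mem_zadd_iff)
qed

section \<open>Augmentation values and linear parts\<close>

text \<open>A scalar in \<open>\<int>\<^sub>2\<close> is encoded as a subset of \<open>unit\<close>; this makes the augmentation
  a \<open>zsum\<close>, so that it inherits the linearity laws of \<open>zsum\<close>.\<close>

lemma aug_eq_mem_zsum: "aug e A \<longleftrightarrow> () \<in> zsum A (\<lambda>w. if \<forall>x\<in>set w. e x then {()} else {})"
proof -
  have "{w \<in> A. () \<in> (if \<forall>x\<in>set w. e x then {()} else {})} = {w \<in> A. \<forall>x\<in>set w. e x}" by auto
  then show ?thesis by (simp only: aug_def zsum_def mem_Collect_eq)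
qed

lemma bit_of_aug: "finite A \<Longrightarrow> bit_of (aug e A) = (\<Sum>w\<in>A. bit_of (\<forall>x\<in>set w. e x))"
  by (simp only: aug_def sum_bit_of_eq_odd_card)

lemma aug_singleton [simp]: "aug e {w} \<longleftrightarrow> (\<forall>x\<in>set w. e x)"
proof -
  have "{w' \<in> {w}. \<forall>x\<in>set w'. e x} = (if \<forall>x\<in>set w. e x then {w} else {})" by auto
  then show ?thesis unfolding aug_def by simp
qed

lemma aug_empty [simp]: "\<not> aug e {}"
  by (simp add: aug_def)

lemma bit_of_aug_zsum:
  "finite I \<Longrightarrow> (\<And>i. i \<in> I \<Longrightarrow> finite (X i)) \<Longrightarrow>
    bit_of (aug e (zsum I X)) = (\<Sum>i\<in>I. bit_of (aug e (X i)))"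
  by (simp only: aug_eq_mem_zsum zsum_zsum_index bit_of_mem_zsum)

lemma aug_zadd: "finite A \<Longrightarrow> finite B \<Longrightarrow> aug e (zadd A B) \<longleftrightarrow> aug e A \<noteq> aug e B"
  by (simp only: aug_eq_mem_zsum zsum_zadd_index mem_zadd_iff)

lemma aug_cong: "(\<And>w x. w \<in> A \<Longrightarrow> x \<in> set w \<Longrightarrow> e x = e' x) \<Longrightarrow> aug e A = aug e' A"
  unfolding aug_def by (rule arg_cong[where f="\<lambda>S. odd (card S)"]) auto

lemma zsum_times_singleton: "finite A \<Longrightarrow> zsum (A \<times> {b}) F = zsum A (\<lambda>u. F (u, b))"
  by (rule set_eq_bitI) (simp add: bit_of_mem_zsum sum.cartesian_product' del: sum_of_bool_eq)

lemma finite_mult [simp]: "finite A \<Longrightarrow> finite B \<Longrightarrow> finite (mult A B)"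
  unfolding mult_def by (rule finite_zsum) auto

lemma mult_Nil_right: "finite A \<Longrightarrow> mult A {[]} = A"
  by (simp add: mult_def zsum_times_singleton zsum_singletons)

lemma mult_singleton [simp]: "mult {u} {v} = {u @ v}"
  by (simp add: mult_def)

lemma mult_empty_right [simp]: "mult A {} = {}"
  by (simp add: mult_def)

lemma aug_mult: "finite A \<Longrightarrow> finite B \<Longrightarrow> aug e (mult A B) \<longleftrightarrow> aug e A \<and> aug e B"
proof -
  assume fin: "finite A" "finite B"
  have "bit_of (aug e (mult A B)) = (\<Sum>p\<in>A \<times> B. bit_of (aug e ((\<lambda>(u, v). {u @ v}) p)))"
    unfolding mult_def using fin by (intro bit_of_aug_zsum) auto
  also have "\<dots> = (\<Sum>u\<in>A. \<Sum>v\<in>B. bit_of (\<forall>x\<in>set u. e x) * bit_of (\<forall>x\<in>set v. e x))"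
    by (simp add: sum.cartesian_product' ball_Un)
  also have "\<dots> = bit_of (aug e A \<and> aug e B)"
    using fin by (simp only: bit_of_aug sum_product bit_of_conj)
  finally show ?thesis by (metis of_bool_eq_iff)
qed

lemma lin_word_Nil [simp]: "lin_word e [] = {}"
  by (simp add: lin_word_def)

lemma lin_word_Cons:
  "lin_word e (x # w) =
     zadd (if \<forall>y\<in>set w. e y then {x} else {}) (if e x then lin_word e w else {})"
proof (rule set_eq_bitI)
  fix y
  let ?m = "length w"
  let ?C = "\<lambda>j. \<forall>l<length w. l \<noteq> j \<longrightarrow> e (w ! l)"
  have C0: "(\<forall>l<Suc ?m. l \<noteq> 0 \<longrightarrow> e ((x # w) ! l)) \<longleftrightarrow> (\<forall>y\<in>set w. e y)"
    by (auto simp: all_set_conv_all_nth less_Suc_eq_0_disj)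
  have CSuc: "(\<forall>l<Suc ?m. l \<noteq> Suc i \<longrightarrow> e ((x # w) ! l)) \<longleftrightarrow> e x \<and> ?C i" for i
    by (auto simp: less_Suc_eq_0_disj)
  have lw: "bit_of (y \<in> lin_word e w) = (\<Sum>i<?m. bit_of (y \<in> (if ?C i then {w ! i} else {})))"
    unfolding lin_word_def lessThan_def[symmetric] by (rule bit_of_mem_zsum) simp
  have "bit_of (y \<in> lin_word e (x # w)) =
     (\<Sum>j<Suc ?m. bit_of (y \<in> (if \<forall>l<Suc ?m. l \<noteq> j \<longrightarrow> e ((x # w) ! l)
        then {(x # w) ! j} else {})))"
    by (simp add: lin_word_def bit_of_mem_zsum lessThan_def)
  also have "\<dots> = bit_of (y \<in> (if \<forall>y\<in>set w. e y then {x} else {})) +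
      (\<Sum>i<?m. bit_of (e x) * bit_of (y \<in> (if ?C i then {w ! i} else {})))"
    by (simp only: sum.lessThan_Suc_shift C0 CSuc nth_Cons_0 nth_Cons_Suc
        bit_of_mem_if_empty bit_of_conj mult.assoc)
  also have "\<dots> = bit_of (y \<in> zadd (if \<forall>y\<in>set w. e y then {x} else {})
      (if e x then lin_word e w else {}))"
    by (simp only: lw sum_distrib_left bit_of_mem_zadd bit_of_mem_if_empty)
  finally show "bit_of (y \<in> lin_word e (x # w)) = \<dots>" .
qed

lemma lin_word_singleton [simp]: "lin_word e [x] = {x}"
  by (simp add: lin_word_Cons)

lemma finite_lin_word [simp]: "finite (lin_word e w)"
  unfolding lin_word_def by (rule finite_zsum) auto

lemma mem_lin_wordD:
  assumes "y \<in> lin_word e w"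
  shows "\<exists>m<length w. w ! m = y \<and> (\<forall>l<length w. l \<noteq> m \<longrightarrow> e (w ! l))"
proof -
  have "lin_word e w \<subseteq>
      (\<Union>j\<in>{j. j < length w}. if \<forall>l<length w. l \<noteq> j \<longrightarrow> e (w ! l) then {w ! j} else {})"
    unfolding lin_word_def by (rule zsum_subset_UN)
  with assms show ?thesis by (auto split: if_splits)
qed

lemma lin_word_cong: "(\<And>x. x \<in> set w \<Longrightarrow> e x = e' x) \<Longrightarrow> lin_word e w = lin_word e' w"
  by (induction w) (auto simp: lin_word_Cons)

lemma zadd_if_empty_exchange:
  "zadd (if a \<and> b then {x} else {}) (if c then zadd (if b then U else {}) (if a then V else {}) else {})
   = zadd (if b then zadd (if a then {x} else {}) (if c then U else {}) else {}) (if c \<and> a then V else {})"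
  by (cases a; cases b; cases c) (simp_all add: zadd_assoc)

lemma lin_word_append:
  "lin_word e (u @ v) =
     zadd (if \<forall>x\<in>set v. e x then lin_word e u else {}) (if \<forall>x\<in>set u. e x then lin_word e v else {})"
proof (induction u)
  case (Cons x u)
  have "lin_word e ((x # u) @ v) = zadd (if (\<forall>y\<in>set u. e y) \<and> (\<forall>y\<in>set v. e y) then {x} else {})
        (if e x then zadd (if \<forall>x\<in>set v. e x then lin_word e u else {})
          (if \<forall>x\<in>set u. e x then lin_word e v else {}) else {})"
    by (simp only: append_Cons lin_word_Cons Cons.IH set_append ball_Un)
  also have "\<dots> = zadd (if \<forall>x\<in>set v. e x then lin_word e (x # u) else {})
        (if \<forall>y\<in>set (x # u). e y then lin_word e v else {})"
    unfolding lin_word_Cons set_simps ball_simps by (rule zadd_if_empty_exchange)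
  finally show ?case .
qed simp

lemma lin_singleton [simp]: "lin e {w} = lin_word e w"
  by (simp add: lin_def)

lemma lin_empty [simp]: "lin e {} = {}"
  by (simp add: lin_def)

lemma lin_zsum:
  "finite I \<Longrightarrow> (\<And>i. i \<in> I \<Longrightarrow> finite (X i)) \<Longrightarrow> lin e (zsum I X) = zsum I (\<lambda>i. lin e (X i))"
  unfolding lin_def by (rule zsum_zsum_index)

lemma lin_zadd: "finite A \<Longrightarrow> finite B \<Longrightarrow> lin e (zadd A B) = zadd (lin e A) (lin e B)"
  unfolding lin_def by (rule zsum_zadd_index)

lemma finite_lin [simp]: "finite A \<Longrightarrow> finite (lin e A)"
  unfolding lin_def by (rule finite_zsum) auto

lemma lin_cong: "(\<And>w x. w \<in> A \<Longrightarrow> x \<in> set w \<Longrightarrow> e x = e' x) \<Longrightarrow> lin e A = lin e' A"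
  unfolding lin_def by (intro zsum_cong lin_word_cong) blast

lemma mem_linD:
  assumes "y \<in> lin e A"
  shows "\<exists>w\<in>A. \<exists>m<length w. w ! m = y \<and> (\<forall>l<length w. l \<noteq> m \<longrightarrow> e (w ! l))"
proof -
  have "lin e A \<subseteq> (\<Union>w\<in>A. lin_word e w)" unfolding lin_def by (rule zsum_subset_UN)
  then show ?thesis using assms mem_lin_wordD by blast
qed

lemma lin_mult:
  assumes fin: "finite P" "finite Q"
  shows "lin e (mult P Q) = zadd (if aug e Q then lin e P else {}) (if aug e P then lin e Q else {})"
proof (rule set_eq_bitI)
  fix y
  let ?T = "\<lambda>w. bit_of (\<forall>x\<in>set w. e x)"
  let ?L = "\<lambda>w. bit_of (y \<in> lin_word e w)"
  have "lin e (mult P Q) = zsum (P \<times> Q) (\<lambda>p. lin e ((\<lambda>(u, v). {u @ v}) p))"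
    unfolding mult_def using fin by (intro lin_zsum) auto
  also have "\<dots> = zsum (P \<times> Q) (\<lambda>(u, v). lin_word e (u @ v))"
    by (intro zsum_cong) auto
  finally have "bit_of (y \<in> lin e (mult P Q)) = (\<Sum>u\<in>P. \<Sum>v\<in>Q. bit_of (y \<in> lin_word e (u @ v)))"
    using fin by (simp add: bit_of_mem_zsum sum.cartesian_product')
  also have "\<dots> = (\<Sum>u\<in>P. \<Sum>v\<in>Q. ?L u * ?T v + ?T u * ?L v)"
    by (simp only: lin_word_append bit_of_mem_zadd bit_of_mem_if_empty mult.commute)
  also have "\<dots> = (\<Sum>u\<in>P. ?L u) * (\<Sum>v\<in>Q. ?T v) + (\<Sum>u\<in>P. ?T u) * (\<Sum>v\<in>Q. ?L v)"
    by (simp only: sum.distrib sum_product)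
  also have "\<dots> = bit_of (y \<in> zadd (if aug e Q then lin e P else {}) (if aug e P then lin e Q else {}))"
    using fin by (simp only: bit_of_aug lin_def bit_of_mem_zsum bit_of_mem_zadd bit_of_mem_if_empty
        mult.commute finite_lin_word)
  finally show "bit_of (y \<in> lin e (mult P Q)) = \<dots>" .
qed

section \<open>Algebra maps and derivations\<close>

lemma finite_word_eval: "(\<And>x. x \<in> set w \<Longrightarrow> finite (f x)) \<Longrightarrow> finite (word_eval f w)"
  by (induction w) auto

lemma finite_eval: "finite A \<Longrightarrow> (\<And>x. finite (f x)) \<Longrightarrow> finite (eval f A)"
  unfolding eval_def by (intro finite_zsum finite_word_eval) auto

lemma aug_word_eval: "(\<And>x. finite (f x)) \<Longrightarrow> aug e (word_eval f w) \<longleftrightarrow> (\<forall>x\<in>set w. aug e (f x))"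
  by (induction w) (auto simp: aug_mult finite_word_eval)

lemma aug_eval:
  assumes "finite A" "\<And>x. finite (f x)"
  shows "aug e (eval f A) = aug (\<lambda>i. aug e (f i)) A"
proof -
  have "bit_of (aug e (eval f A)) = (\<Sum>w\<in>A. bit_of (aug e (word_eval f w)))"
    unfolding eval_def using assms by (intro bit_of_aug_zsum finite_word_eval) auto
  also have "\<dots> = bit_of (aug (\<lambda>i. aug e (f i)) A)"
    using assms by (simp add: aug_word_eval bit_of_aug)
  finally show ?thesis by (metis of_bool_eq_iff)
qed

lemma lin_word_eval:
  "(\<And>x. finite (f x)) \<Longrightarrow>
    lin e (word_eval f w) = zsum (lin_word (\<lambda>i. aug e (f i)) w) (\<lambda>i. lin e (f i))"
proof (induction w)
  case (Cons x w)
  have "finite (word_eval f w)" using Cons.prems by (intro finite_word_eval)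
  then have "lin e (word_eval f (x # w)) =
      zadd (if \<forall>y\<in>set w. aug e (f y) then lin e (f x) else {})
        (if aug e (f x) then zsum (lin_word (\<lambda>i. aug e (f i)) w) (\<lambda>i. lin e (f i)) else {})"
    using Cons by (simp add: lin_mult aug_word_eval)
  also have "\<dots> = zsum (lin_word (\<lambda>i. aug e (f i)) (x # w)) (\<lambda>i. lin e (f i))"
    by (cases "aug e (f x)"; cases "\<forall>y\<in>set w. aug e (f y)")
      (auto simp add: lin_word_Cons zsum_zadd_index)
  finally show ?case .
qed simp

lemma lin_eval:
  assumes "finite A" "\<And>x. finite (f x)"
  shows "lin e (eval f A) = zsum (lin (\<lambda>i. aug e (f i)) A) (\<lambda>i. lin e (f i))"
proof -
  have "lin e (eval f A) = zsum A (\<lambda>w. lin e (word_eval f w))"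
    unfolding eval_def using assms by (intro lin_zsum finite_word_eval) auto
  also have "\<dots> = zsum A (\<lambda>w. zsum (lin_word (\<lambda>i. aug e (f i)) w) (\<lambda>i. lin e (f i)))"
    using assms by (intro zsum_cong lin_word_eval)
  also have "\<dots> = zsum (lin (\<lambda>i. aug e (f i)) A) (\<lambda>i. lin e (f i))"
    unfolding lin_def using assms by (intro zsum_zsum_index[symmetric]) auto
  finally show ?thesis .
qed

lemma eval_singleton: "finite (f x) \<Longrightarrow> eval f {[x]} = f x"
  by (simp add: eval_def mult_Nil_right)

lemma eval_zadd: "finite A \<Longrightarrow> finite B \<Longrightarrow> eval f (zadd A B) = zadd (eval f A) (eval f B)"
  unfolding eval_def by (rule zsum_zadd_index)

lemma word_eval_fixed: "(\<And>x. x \<in> set w \<Longrightarrow> f x = {[x]}) \<Longrightarrow> word_eval f w = {w}"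
  by (induction w) auto

lemma eval_fixed: "(\<And>w x. w \<in> A \<Longrightarrow> x \<in> set w \<Longrightarrow> f x = {[x]}) \<Longrightarrow> eval f A = A"
  unfolding eval_def by (simp add: zsum_cong[of A _ "\<lambda>w. {w}"] word_eval_fixed zsum_singletons)

lemma eval_gen: "eval gen A = A"
  by (rule eval_fixed) (simp add: gen_def)

lemma comp_gen_left: "comp gen f = f"
  by (simp add: Defs.comp_def eval_gen)

lemma finite_dword: "(\<And>x. x \<in> set w \<Longrightarrow> finite (d x)) \<Longrightarrow> finite (dword d w)"
  by (induction w) auto

lemma aug_lin_dword:
  "(\<And>x. x \<in> set w \<Longrightarrow> finite (d x) \<and> \<not> aug e (d x)) \<Longrightarrow>
    \<not> aug e (dword d w) \<and> lin e (dword d w) = zsum (lin_word e w) (\<lambda>i. lin e (d i))"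
proof (induction w)
  case (Cons x w)
  have fin: "finite (dword d w)" "finite (d x)" and dx: "\<not> aug e (d x)"
    using Cons.prems by (auto intro: finite_dword)
  have IH: "\<not> aug e (dword d w)" "lin e (dword d w) = zsum (lin_word e w) (\<lambda>i. lin e (d i))"
    using Cons by auto
  have "lin e (dword d (x # w)) =
      zadd (if \<forall>y\<in>set w. e y then lin e (d x) else {})
        (if e x then zsum (lin_word e w) (\<lambda>i. lin e (d i)) else {})"
    using fin dx IH by (simp add: lin_zadd lin_mult)
  also have "\<dots> = zsum (lin_word e (x # w)) (\<lambda>i. lin e (d i))"
    by (cases "e x"; cases "\<forall>y\<in>set w. e y") (auto simp add: lin_word_Cons zsum_zadd_index)
  finally show ?case using fin dx IH by (simp add: aug_zadd aug_mult)
qed simp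

lemma aug_lin_dext:
  assumes fin: "finite B" and d: "\<And>w x. w \<in> B \<Longrightarrow> x \<in> set w \<Longrightarrow> finite (d x) \<and> \<not> aug e (d x)"
  shows "\<not> aug e (dext d B) \<and> lin e (dext d B) = zsum (lin e B) (\<lambda>i. lin e (d i))"
proof -
  have fin_dword: "\<And>w. w \<in> B \<Longrightarrow> finite (dword d w)" using d by (intro finite_dword) blast
  have "bit_of (aug e (dext d B)) = (\<Sum>w\<in>B. bit_of (aug e (dword d w)))"
    unfolding dext_def using fin fin_dword by (intro bit_of_aug_zsum)
  also have "\<dots> = 0" using aug_lin_dword d by simp
  finally have "\<not> aug e (dext d B)" by simp
  moreover have "lin e (dext d B) = zsum B (\<lambda>w. lin e (dword d w))"
    unfolding dext_def using fin fin_dword by (intro lin_zsum)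
  moreover have "\<dots> = zsum B (\<lambda>w. zsum (lin_word e w) (\<lambda>i. lin e (d i)))"
    using aug_lin_dword d by (intro zsum_cong) blast
  moreover have "\<dots> = zsum (lin e B) (\<lambda>i. lin e (d i))"
    unfolding lin_def using fin by (intro zsum_zsum_index[symmetric]) auto
  ultimately show ?thesis by simp
qed

lemma dext_singleton: "finite (d i) \<Longrightarrow> dext d {[i]} = d i"
  by (simp add: dext_def mult_Nil_right)

lemma wdeg_eq_single_letter:
  assumes "m < length w" "\<And>l. l < length w \<Longrightarrow> l \<noteq> m \<Longrightarrow> g (w ! l) = 0"
  shows "wdeg g w = g (w ! m)"
proof -
  have "wdeg g w = (\<Sum>l\<in>{..<length w}. g (w ! l))"
    unfolding wdeg_def by (simp add: sum_list_sum_nth atLeast0LessThan)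
  also have "\<dots> = g (w ! m) + (\<Sum>l\<in>{..<length w} - {m}. g (w ! l))"
    using assms(1) by (simp add: sum.remove)
  also have "(\<Sum>l\<in>{..<length w} - {m}. g (w ! l)) = 0"
    using assms(2) by (intro sum.neutral) auto
  finally show ?thesis by simp
qed

lemma wdeg_eq_0: "(\<And>x. x \<in> set w \<Longrightarrow> g x = 0) \<Longrightarrow> wdeg g w = 0"
  unfolding wdeg_def by (induction w) auto

lemma dga_map_gen_eq:
  assumes "dga_map n g d g' d' gen" "i < n" "finite (d' i)"
  shows "g' i = g i" "d' i = d i"
proof -
  have "wdeg g' [i] = g i" "dext d' {[i]} = eval gen (d i)"
    using assms(1,2) unfolding dga_map_def gen_def by auto
  then show "g' i = g i" "d' i = d i"
    using assms(3) by (simp_all add: wdeg_def dext_singleton eval_gen)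
qed

section \<open>Linearized algebra maps\<close>

lemma lin_map_subset_UN: "lin_map f e V \<subseteq> (\<Union>i\<in>V. lin e (f i))"
  unfolding lin_map_def linext_def by (rule zsum_subset_UN)

lemma lin_map_zadd:
  "finite V \<Longrightarrow> finite W \<Longrightarrow> lin_map f e (zadd V W) = zadd (lin_map f e V) (lin_map f e W)"
  unfolding lin_map_def linext_def by (rule zsum_zadd_index)

lemma lin_map_zadd_fixing_beyond:
  assumes fixed: "\<And>i. n \<le> i \<Longrightarrow> f i = {[i]}"
  shows "lin_map f e (zadd V W) = zadd (lin_map f e V) (lin_map f e W)"
  unfolding lin_map_def linext_def
proof (rule zsum_zadd_index_finite_fibres)
  fix y
  have "{i. y \<in> lin e (f i)} \<subseteq> {..<n} \<union> {y}"
  proof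
    fix i assume "i \<in> {i. y \<in> lin e (f i)}"
    then show "i \<in> {..<n} \<union> {y}" using fixed[of i] by (cases "n \<le> i") auto
  qed
  then show "finite {i. y \<in> lin e (f i)}" by (rule finite_subset) simp
qed

lemma lin_map_gen: "lin_map gen e = id"
  by (simp add: fun_eq_iff lin_map_def linext_def gen_def zsum_singletons)

lemma lin_map_comp:
  assumes "finite V" "\<And>x. finite (f x)" "\<And>x. finite (g x)"
  shows "lin_map (comp f g) e V = lin_map f e (lin_map g (\<lambda>x. aug e (f x)) V)"
proof -
  have "lin_map (comp f g) e V = zsum V (\<lambda>i. lin e (eval f (g i)))"
    by (simp add: lin_map_def linext_def Defs.comp_def)
  also have "\<dots> = zsum V (\<lambda>i. zsum (lin (\<lambda>x. aug e (f x)) (g i)) (\<lambda>x. lin e (f x)))"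
    using assms by (intro zsum_cong lin_eval)
  also have "\<dots> = zsum (zsum V (\<lambda>i. lin (\<lambda>x. aug e (f x)) (g i))) (\<lambda>x. lin e (f x))"
    using assms by (intro zsum_zsum_index[symmetric]) auto
  also have "\<dots> = lin_map f e (lin_map g (\<lambda>x. aug e (f x)) V)"
    by (simp add: lin_map_def linext_def)
  finally show ?thesis .
qed

lemma lin_map_left_inverse:
  assumes "finite V" "\<And>x. finite (f x)" "\<And>x. finite (g x)" "\<And>x. eval f (g x) = {[x]}"
  shows "lin_map f e (lin_map g (\<lambda>x. aug e (f x)) V) = V"
proof -
  have "lin_map f e (lin_map g (\<lambda>x. aug e (f x)) V) = lin_map (comp f g) e V"
    using assms by (intro lin_map_comp[symmetric])
  also have "comp f g = gen" using assms(4) by (simp add: fun_eq_iff Defs.comp_def gen_def)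
  finally show ?thesis by (simp add: lin_map_gen)
qed

lemma lin_map_chain:
  assumes f: "dga_map n g d g' d' f" "\<And>x. finite (f x)"
    and d: "\<And>i. i < n \<Longrightarrow> finite (d i)" and d': "\<And>i. i < n \<Longrightarrow> finite (d' i) \<and> \<not> aug e (d' i)"
    and V: "V \<subseteq> {..<n}"
  shows "lin_map f e (lin_diff d (\<lambda>x. aug e (f x)) V) = lin_diff d' e (lin_map f e V)"
proof -
  have fin: "finite V" using V finite_subset by blast
  have "lin_map f e (lin_diff d (\<lambda>x. aug e (f x)) V) =
      zsum V (\<lambda>i. zsum (lin (\<lambda>x. aug e (f x)) (d i)) (\<lambda>x. lin e (f x)))"
    unfolding lin_map_def lin_diff_def linext_def using fin V d by (intro zsum_zsum_index) auto
  also have "\<dots> = zsum V (\<lambda>i. zsum (lin e (f i)) (\<lambda>x. lin e (d' x)))"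
  proof (rule zsum_cong)
    fix i assume "i \<in> V"
    then have i: "i < n" using V by auto
    then have letters: "\<And>w x. w \<in> f i \<Longrightarrow> x \<in> set w \<Longrightarrow> x < n"
      using f(1) unfolding dga_map_def by blast
    have "zsum (lin (\<lambda>x. aug e (f x)) (d i)) (\<lambda>x. lin e (f x)) = lin e (eval f (d i))"
      using lin_eval[OF d[OF i] f(2)] ..
    also have "\<dots> = lin e (dext d' (f i))"
      using f(1) i unfolding dga_map_def by simp
    also have "\<dots> = zsum (lin e (f i)) (\<lambda>x. lin e (d' x))"
      using aug_lin_dext[of "f i" d' e] f(2) d' letters by blast
    finally show "zsum (lin (\<lambda>x. aug e (f x)) (d i)) (\<lambda>x. lin e (f x)) = \<dots>" .
  qed
  also have "\<dots> = lin_diff d' e (lin_map f e V)"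
    unfolding lin_map_def lin_diff_def linext_def using fin f(2) by (intro zsum_zsum_index[symmetric]) auto
  finally show ?thesis .
qed

lemma lin_dga_map_letter:
  assumes f: "dga_map n g d g' d' f" and e: "augmentation n g' d' e"
    and i: "i < n" and y: "y \<in> lin e (f i)"
  obtains w where "w \<in> f i" "y \<in> set w" "y < n" "g' y = g i"
proof -
  obtain w m where w: "w \<in> f i" "m < length w" "w ! m = y"
      "\<And>l. l < length w \<Longrightarrow> l \<noteq> m \<Longrightarrow> e (w ! l)"
    using mem_linD[OF y] by blast
  have letters: "set w \<subseteq> {..<n}" and deg: "wdeg g' w = g i"
    using f i w(1) unfolding dga_map_def by auto
  have "wdeg g' w = g' (w ! m)"
  proof (rule wdeg_eq_single_letter[OF w(2)])
    fix l assume "l < length w" "l \<noteq> m"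
    moreover from this have "w ! l < n" using letters nth_mem by blast
    ultimately show "g' (w ! l) = 0" using e w(4) unfolding augmentation_def by blast
  qed
  moreover have "y \<in> set w" using w(2,3) nth_mem by blast
  ultimately show ?thesis using that w letters deg by auto
qed

lemma augmentation_pullback:
  assumes f: "dga_map n g d g' d' f" "\<And>x. finite (f x)"
    and d: "\<And>i. i < n \<Longrightarrow> finite (d i)" and d': "\<And>i. i < n \<Longrightarrow> finite (d' i)"
    and e: "augmentation n g' d' e"
  shows "augmentation n g d (\<lambda>x. aug e (f x))"
  unfolding augmentation_def
proof (intro conjI allI impI)
  fix i assume i: "i < n" and "aug e (f i)"
  then obtain w where w: "w \<in> f i" "\<forall>x\<in>set w. e x"
    unfolding aug_def by (metis (no_types, lifting) card.empty empty_Collect_eq even_zero)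
  have "set w \<subseteq> {..<n}" "wdeg g' w = g i" using f(1) i w(1) unfolding dga_map_def by auto
  moreover have "wdeg g' w = 0"
    using calculation(1) w(2) e unfolding augmentation_def by (intro wdeg_eq_0) auto
  ultimately show "g i = 0" by simp
next
  fix i assume i: "i < n"
  have "aug (\<lambda>x. aug e (f x)) (d i) = aug e (eval f (d i))"
    using aug_eval[OF d[OF i] f(2)] ..
  also have "\<dots> = aug e (dext d' (f i))"
    using f(1) i unfolding dga_map_def by simp
  finally show "\<not> aug (\<lambda>x. aug e (f x)) (d i)"
    using aug_lin_dext[of "f i" d' e] f d' e i unfolding dga_map_def augmentation_def by blast
qed

section \<open>Filtered chain isomorphisms and interleavings\<close>

definition filtered_chain_map ::
  "nat \<Rightarrow> (nat \<Rightarrow> int) \<Rightarrow> (nat \<Rightarrow> real) \<Rightarrow> (nat set \<Rightarrow> nat set) \<Rightarrow> (nat set \<Rightarrow> nat set)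
    \<Rightarrow> (nat set \<Rightarrow> nat set) \<Rightarrow> bool" where
  "filtered_chain_map n g h D D' F \<longleftrightarrow>
     (\<forall>V W. V \<subseteq> {..<n} \<longrightarrow> W \<subseteq> {..<n} \<longrightarrow> F (zadd V W) = zadd (F V) (F W)) \<and>
     (\<forall>V t. V \<in> filt n h t \<longrightarrow> F V \<in> filt n h t) \<and>
     (\<forall>V k. V \<subseteq> {..<n} \<longrightarrow> homog g k V \<longrightarrow> homog g k (F V)) \<and>
     (\<forall>V. V \<subseteq> {..<n} \<longrightarrow> F (D V) = D' (F V))"

definition filtered_chain_iso ::
  "nat \<Rightarrow> (nat \<Rightarrow> int) \<Rightarrow> (nat \<Rightarrow> real) \<Rightarrow> (nat set \<Rightarrow> nat set) \<Rightarrow> (nat set \<Rightarrow> nat set)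
    \<Rightarrow> (nat set \<Rightarrow> nat set) \<Rightarrow> bool" where
  "filtered_chain_iso n g h D D' F \<longleftrightarrow> filtered_chain_map n g h D D' F \<and>
     (\<exists>G. filtered_chain_map n g h D' D G \<and> (\<forall>V. V \<subseteq> {..<n} \<longrightarrow> G (F V) = V \<and> F (G V) = V))"

lemma filt_subset_lessThan: "V \<in> filt n h t \<Longrightarrow> V \<subseteq> {..<n}"
  by (auto simp: filt_def)

lemma cyc_subset_lessThan: "z \<in> cyc D n h g t k \<Longrightarrow> z \<subseteq> {..<n}"
  by (auto simp: cyc_def dest: filt_subset_lessThan)

lemma subset_lessThan_in_filt: "V \<subseteq> {..<n} \<Longrightarrow> V \<in> filt n h (\<Sum>i<n. \<bar>h i\<bar>)"
  unfolding filt_def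
  by (auto intro!: order.trans[OF abs_ge_self member_le_sum[of _ "{..<n}" "\<lambda>i. \<bar>h i\<bar>"]])

lemma filt_shift: "(\<forall>i<n. \<bar>h' i - h i\<bar> \<le> \<delta>) \<Longrightarrow> V \<in> filt n h t \<Longrightarrow> V \<in> filt n h' (t + \<delta>)"
  unfolding filt_def by fastforce

lemma homog_cong: "V \<subseteq> {..<n} \<Longrightarrow> (\<forall>i<n. g' i = g i) \<Longrightarrow> homog g' k V = homog g k V"
  unfolding homog_def by auto

lemma cyc_shift:
  assumes "\<forall>i<n. \<bar>h' i - h i\<bar> \<le> \<delta>" "\<forall>i<n. g' i = g i" "z \<in> cyc D n h g t k"
  shows "z \<in> cyc D n h' g' (t + \<delta>) k"
proof -
  have z: "z \<in> filt n h t" "homog g k z" "D z = {}" using assms(3) by (simp_all add: cyc_def)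
  then have "homog g' k z" using homog_cong[OF filt_subset_lessThan assms(2)] by blast
  then show ?thesis using z filt_shift[OF assms(1)] by (simp add: cyc_def)
qed

lemma bdy_shift:
  assumes "\<forall>i<n. \<bar>h' i - h i\<bar> \<le> \<delta>" "\<forall>i<n. g' i = g i" "z \<in> bdy D n h g t k"
  shows "z \<in> bdy D n h' g' (t + \<delta>) k"
proof -
  obtain W where W: "z = D W" "W \<in> filt n h t" "homog g (k + 1) W"
    using assms(3) by (auto simp: bdy_def)
  then have "homog g' (k + 1) W" using homog_cong[OF filt_subset_lessThan assms(2)] by blast
  then show ?thesis using W filt_shift[OF assms(1)] by (auto simp: bdy_def)
qed

lemma empty_in_bdy: "D {} = {} \<Longrightarrow> {} \<in> bdy D n h g t k"
  unfolding bdy_def filt_def homog_def by (auto intro!: exI[of _ "{}"])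

lemma filtered_chain_mapD:
  assumes "filtered_chain_map n g h D D' F"
  shows "V \<subseteq> {..<n} \<Longrightarrow> W \<subseteq> {..<n} \<Longrightarrow> F (zadd V W) = zadd (F V) (F W)"
    and "V \<in> filt n h t \<Longrightarrow> F V \<in> filt n h t"
    and "V \<subseteq> {..<n} \<Longrightarrow> homog g k V \<Longrightarrow> homog g k (F V)"
    and "V \<subseteq> {..<n} \<Longrightarrow> F (D V) = D' (F V)"
  using assms unfolding filtered_chain_map_def by meson+

lemma filtered_chain_map_subset:
  "filtered_chain_map n g h D D' F \<Longrightarrow> V \<subseteq> {..<n} \<Longrightarrow> F V \<subseteq> {..<n}"
  by (meson filt_subset_lessThan filtered_chain_mapD(2) subset_lessThan_in_filt)

lemma filtered_chain_map_empty: "filtered_chain_map n g h D D' F \<Longrightarrow> F {} = {}"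
  using filtered_chain_mapD(1)[of n g h D D' F "{}" "{}"] by simp

lemma filtered_chain_map_id: "filtered_chain_map n g h D D id"
  by (simp add: filtered_chain_map_def)

lemma filtered_chain_map_comp:
  assumes F: "filtered_chain_map n g h D' D'' F" and G: "filtered_chain_map n g h D D' G"
  shows "filtered_chain_map n g h D D'' (F \<circ> G)"
  unfolding filtered_chain_map_def o_def
proof (intro conjI allI impI)
  fix V W assume "V \<subseteq> {..<n}" "W \<subseteq> {..<n}"
  then show "F (G (zadd V W)) = zadd (F (G V)) (F (G W))"
    by (simp add: filtered_chain_mapD(1)[OF F] filtered_chain_mapD(1)[OF G]
        filtered_chain_map_subset[OF G])
next
  fix V t assume "V \<in> filt n h t"
  then show "F (G V) \<in> filt n h t" by (simp add: filtered_chain_mapD(2)[OF F] filtered_chain_mapD(2)[OF G])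
next
  fix V k assume "V \<subseteq> {..<n}" "homog g k V"
  then show "homog g k (F (G V))"
    by (simp add: filtered_chain_mapD(3)[OF F] filtered_chain_mapD(3)[OF G] filtered_chain_map_subset[OF G])
next
  fix V assume "V \<subseteq> {..<n}"
  then show "F (G (D V)) = D'' (F (G V))"
    by (simp add: filtered_chain_mapD(4)[OF F] filtered_chain_mapD(4)[OF G] filtered_chain_map_subset[OF G])
qed

lemma filtered_chain_map_cong:
  assumes F: "filtered_chain_map n g h D D' F" and D_subset: "\<And>V. V \<subseteq> {..<n} \<Longrightarrow> D V \<subseteq> {..<n}"
    and D: "\<And>V. V \<subseteq> {..<n} \<Longrightarrow> D1 V = D V" and D': "\<And>V. V \<subseteq> {..<n} \<Longrightarrow> D1' V = D' V"
    and F1: "\<And>V. V \<subseteq> {..<n} \<Longrightarrow> F1 V = F V"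
  shows "filtered_chain_map n g h D1 D1' F1"
  unfolding filtered_chain_map_def
proof (intro conjI allI impI)
  fix V W assume "V \<subseteq> {..<n}" "W \<subseteq> {..<n}"
  moreover from this have "zadd V W \<subseteq> {..<n}" by (auto simp: zadd_def)
  ultimately show "F1 (zadd V W) = zadd (F1 V) (F1 W)" by (simp add: F1 filtered_chain_mapD(1)[OF F])
next
  fix V t assume "V \<in> filt n h t"
  then show "F1 V \<in> filt n h t" by (simp add: F1 filt_subset_lessThan filtered_chain_mapD(2)[OF F])
next
  fix V k assume "V \<subseteq> {..<n}" "homog g k V"
  then show "homog g k (F1 V)" by (simp add: F1 filtered_chain_mapD(3)[OF F])
next
  fix V assume "V \<subseteq> {..<n}"
  then show "F1 (D1 V) = D1' (F1 V)"
    by (simp add: D D' F1 D_subset filtered_chain_mapD(4)[OF F] filtered_chain_map_subset[OF F])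
qed

lemma filtered_chain_iso_id: "filtered_chain_iso n g h D D id"
  unfolding filtered_chain_iso_def by (auto intro: filtered_chain_map_id)

lemma filtered_chain_iso_comp:
  assumes F: "filtered_chain_iso n g h D' D'' F" and G: "filtered_chain_iso n g h D D' G"
  shows "filtered_chain_iso n g h D D'' (F \<circ> G)"
proof -
  obtain F' where F': "filtered_chain_map n g h D'' D' F'"
      "\<And>V. V \<subseteq> {..<n} \<Longrightarrow> F' (F V) = V \<and> F (F' V) = V"
    using F unfolding filtered_chain_iso_def by blast
  obtain G' where G': "filtered_chain_map n g h D' D G'"
      "\<And>V. V \<subseteq> {..<n} \<Longrightarrow> G' (G V) = V \<and> G (G' V) = V"
    using G unfolding filtered_chain_iso_def by blast
  have F_map: "filtered_chain_map n g h D' D'' F" and G_map: "filtered_chain_map n g h D D' G"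
    using F G by (simp_all add: filtered_chain_iso_def)
  have "filtered_chain_map n g h D D'' (F \<circ> G)"
    using F_map G_map by (rule filtered_chain_map_comp)
  moreover have "filtered_chain_map n g h D'' D (G' \<circ> F')"
    using G'(1) F'(1) by (rule filtered_chain_map_comp)
  moreover have "(G' \<circ> F') ((F \<circ> G) V) = V \<and> (F \<circ> G) ((G' \<circ> F') V) = V" if "V \<subseteq> {..<n}" for V
    using that by (simp add: F'(2) G'(2) filtered_chain_map_subset[OF G_map] filtered_chain_map_subset[OF F'(1)])
  ultimately show ?thesis unfolding filtered_chain_iso_def by blast
qed

lemma filtered_chain_iso_cong:
  assumes iso: "filtered_chain_iso n g h D D' F"
    and D_subset: "\<And>V. V \<subseteq> {..<n} \<Longrightarrow> D V \<subseteq> {..<n}"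
    and D'_subset: "\<And>V. V \<subseteq> {..<n} \<Longrightarrow> D' V \<subseteq> {..<n}"
    and D: "\<And>V. V \<subseteq> {..<n} \<Longrightarrow> D1 V = D V" and D': "\<And>V. V \<subseteq> {..<n} \<Longrightarrow> D1' V = D' V"
    and F: "\<And>V. V \<subseteq> {..<n} \<Longrightarrow> F1 V = F V"
  shows "filtered_chain_iso n g h D1 D1' F1"
proof -
  obtain G where G: "filtered_chain_map n g h D' D G"
      "\<And>V. V \<subseteq> {..<n} \<Longrightarrow> G (F V) = V \<and> F (G V) = V"
    using iso unfolding filtered_chain_iso_def by blast
  have "filtered_chain_map n g h D D' F" using iso by (simp add: filtered_chain_iso_def)
  then have "filtered_chain_map n g h D1 D1' F1" using D_subset D D' F by (rule filtered_chain_map_cong)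
  moreover have "filtered_chain_map n g h D1' D1 G"
    by (rule filtered_chain_map_cong[OF G(1)]) (simp_all add: D'_subset D' D)
  moreover have "G (F1 V) = V \<and> F1 (G V) = V" if "V \<subseteq> {..<n}" for V
    using that G F filtered_chain_map_subset[OF G(1)] by simp
  ultimately show ?thesis unfolding filtered_chain_iso_def by blast
qed

lemma filtered_chain_map_cyc:
  assumes F: "filtered_chain_map n g h D D' F" and "z \<in> cyc D n h g t k"
  shows "F z \<in> cyc D' n h g t k"
proof -
  have z: "z \<in> filt n h t" "homog g k z" "D z = {}" using assms(2) by (simp_all add: cyc_def)
  have z_subset: "z \<subseteq> {..<n}" using z(1) by (rule filt_subset_lessThan)
  have "D' (F z) = F (D z)" using z_subset by (simp add: filtered_chain_mapD(4)[OF F])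
  then show ?thesis using z z_subset
    by (simp add: cyc_def filtered_chain_mapD(2,3)[OF F] filtered_chain_map_empty[OF F])
qed

lemma filtered_chain_map_bdy:
  assumes F: "filtered_chain_map n g h D D' F" and "z \<in> bdy D n h g t k"
  shows "F z \<in> bdy D' n h g t k"
proof -
  obtain W where W: "z = D W" "W \<in> filt n h t" "homog g (k + 1) W"
    using assms(2) by (auto simp: bdy_def)
  moreover from W(2) have "W \<subseteq> {..<n}" by (rule filt_subset_lessThan)
  ultimately have "F z = D' (F W)" "F W \<in> filt n h t" "homog g (k + 1) (F W)"
    by (simp_all add: filtered_chain_mapD[OF F])
  then show ?thesis by (auto simp: bdy_def)
qed

lemma filtered_chain_iso_induces_interleaving:
  assumes iso: "filtered_chain_iso n g h D D' F"
    and F_zadd: "\<And>V W. F (zadd V W) = zadd (F V) (F W)"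
    and h': "\<forall>i<n. \<bar>h' i - h i\<bar> \<le> \<delta>" and g': "\<forall>i<n. g' i = g i"
    and D: "D {} = {}" and D': "D' {} = {}"
  shows "induces_interleaving n g h D g' h' D' \<delta> F"
proof -
  obtain G where F: "filtered_chain_map n g h D D' F" and G: "filtered_chain_map n g h D' D G"
      and inverse: "\<And>V. V \<subseteq> {..<n} \<Longrightarrow> G (F V) = V \<and> F (G V) = V"
    using iso unfolding filtered_chain_iso_def by blast
  have h: "\<forall>i<n. \<bar>h i - h' i\<bar> \<le> \<delta>" and g: "\<forall>i<n. g i = g' i"
    using h' g' by (simp_all add: abs_minus_commute)
  have F_cyc: "F z \<in> cyc D' n h' g' (t + \<delta>) k" if "z \<in> cyc D n h g t k" for z t k
    using cyc_shift[OF h' g' filtered_chain_map_cyc[OF F that]] .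
  have F_bdy: "F z \<in> bdy D' n h' g' (t + \<delta>) k" if "z \<in> bdy D n h g t k" for z t k
    using bdy_shift[OF h' g' filtered_chain_map_bdy[OF F that]] .
  have G_cyc: "G z \<in> cyc D n h g (t + \<delta>) k" if "z \<in> cyc D' n h' g' t k" for z t k
    using filtered_chain_map_cyc[OF G cyc_shift[OF h g that]] .
  have G_bdy: "G z \<in> bdy D n h g (t + \<delta>) k" if "z \<in> bdy D' n h' g' t k" for z t k
    using filtered_chain_map_bdy[OF G bdy_shift[OF h g that]] .
  have G_zadd: "G (zadd z w) = zadd (G z) (G w)"
    if "z \<in> cyc D' n h' g' t k" "w \<in> cyc D' n h' g' t k" for z w t k
  proof -
    have "z \<subseteq> {..<n}" "w \<subseteq> {..<n}" using that by (simp_all add: cyc_subset_lessThan)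
    then show ?thesis by (rule filtered_chain_mapD(1)[OF G])
  qed
  have G_F: "G (F z) = z" if "z \<in> cyc D n h g t k" for z t k
    using inverse[OF cyc_subset_lessThan[OF that]] ..
  have F_G: "F (G z) = z" if "z \<in> cyc D' n h' g' t k" for z t k
    using inverse[OF cyc_subset_lessThan[OF that]] ..
  have empty_bdy: "{} \<in> bdy D n h g s k" "{} \<in> bdy D' n h' g' s k" for s k
    using D D' by (simp_all add: empty_in_bdy)
  show ?thesis
    unfolding induces_interleaving_def
    using F_zadd F_cyc F_bdy G_cyc G_zadd G_bdy G_F F_G empty_bdy
    by (intro conjI allI ballI impI exI[of _ "\<lambda>_. G"]) simp_all
qed

section \<open>Linearized complexes of a filtered DGA\<close>

lemma filtered_ce_dgaD:
  assumes "filtered_ce_dga n g h d"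
  shows "i < n \<Longrightarrow> finite (d i)" and "\<forall>i<n. \<forall>w\<in>d i. set w \<subseteq> {..<n}"
  using assms unfolding filtered_ce_dga_def by blast+

lemma augmentation_cong:
  assumes "\<forall>i<n. \<forall>w\<in>d i. set w \<subseteq> {..<n}" "\<And>i. i < n \<Longrightarrow> e i = e' i"
  shows "augmentation n g d e = augmentation n g d e'"
proof -
  have "aug e (d i) = aug e' (d i)" if "i < n" for i
    using assms that by (intro aug_cong) blast
  then show ?thesis unfolding augmentation_def using assms(2) by auto
qed

lemma lin_diff_cong_generators:
  assumes letters: "\<forall>i<n. \<forall>w\<in>d i. set w \<subseteq> {..<n}" and V: "V \<subseteq> {..<n}"
    and d': "\<And>i. i < n \<Longrightarrow> d' i = d i" and e': "\<And>i. i < n \<Longrightarrow> e' i = e i"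
  shows "lin_diff d' e' V = lin_diff d e V"
  unfolding lin_diff_def linext_def
proof (rule zsum_cong)
  fix i assume "i \<in> V"
  then have i: "i < n" using V by blast
  have "lin e' (d i) = lin e (d i)"
  proof (rule lin_cong)
    fix w x assume "w \<in> d i" "x \<in> set w"
    then have "x < n" using letters i by blast
    then show "e' x = e x" by (rule e')
  qed
  then show "lin e' (d' i) = lin e (d i)" using d'[OF i] by simp
qed

lemma lin_diff_subset:
  assumes "\<forall>i<n. \<forall>w\<in>d i. set w \<subseteq> {..<n}" "V \<subseteq> {..<n}"
  shows "lin_diff d e V \<subseteq> {..<n}"
proof
  fix y assume y: "y \<in> lin_diff d e V"
  have "lin_diff d e V \<subseteq> (\<Union>i\<in>V. lin e (d i))"
    unfolding lin_diff_def linext_def by (rule zsum_subset_UN)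
  then obtain i where i: "i \<in> V" "y \<in> lin e (d i)" using y by blast
  then obtain w m where "w \<in> d i" "m < length w" "w ! m = y" using mem_linD by blast
  moreover have "i < n" using i(1) assms(2) by blast
  ultimately show "y \<in> {..<n}" using assms(1) nth_mem by blast
qed

lemma mem_lin_map_dga_mapE:
  assumes f: "dga_map n g d g' d' f" and e: "augmentation n g' d' e"
    and height: "\<forall>i<n. \<forall>w\<in>f i. \<forall>x\<in>set w. h x \<le> h i"
    and V: "V \<subseteq> {..<n}" and y: "y \<in> lin_map f e V"
  obtains i where "i \<in> V" "y < n" "h y \<le> h i" "g' y = g i"
proof -
  obtain i where i: "i \<in> V" "y \<in> lin e (f i)" using y lin_map_subset_UN by blast
  moreover from i(1) V have "i < n" by blast
  ultimately obtain w where "w \<in> f i" "y \<in> set w" "y < n" "g' y = g i"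
    using lin_dga_map_letter[OF f e] by metis
  then show ?thesis using that i(1) height \<open>i < n\<close> by blast
qed

lemma lin_map_filtered_chain_map:
  assumes f: "dga_map n g d g d f" "\<And>x. finite (f x)"
    and d: "\<And>i. i < n \<Longrightarrow> finite (d i)" and e: "augmentation n g d e"
    and height: "\<forall>i<n. \<forall>w\<in>f i. \<forall>x\<in>set w. h x \<le> h i"
  shows "filtered_chain_map n g h (lin_diff d (\<lambda>x. aug e (f x))) (lin_diff d e) (lin_map f e)"
  unfolding filtered_chain_map_def
proof (intro conjI allI impI)
  fix V W :: "nat set" assume "V \<subseteq> {..<n}" "W \<subseteq> {..<n}"
  then show "lin_map f e (zadd V W) = zadd (lin_map f e V) (lin_map f e W)"
    by (meson finite_lessThan finite_subset lin_map_zadd)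
next
  fix V t assume V: "V \<in> filt n h t"
  have "y < n \<and> h y \<le> t" if y: "y \<in> lin_map f e V" for y
  proof -
    obtain i where "i \<in> V" "y < n" "h y \<le> h i"
      using mem_lin_map_dga_mapE[OF f(1) e height filt_subset_lessThan[OF V] y] by blast
    moreover have "h i \<le> t" using V \<open>i \<in> V\<close> by (auto simp: filt_def)
    ultimately show ?thesis by simp
  qed
  then show "lin_map f e V \<in> filt n h t" by (auto simp: filt_def)
next
  fix V k assume V: "V \<subseteq> {..<n}" "homog g k V"
  have "g y = k" if y: "y \<in> lin_map f e V" for y
  proof -
    obtain i where "i \<in> V" "g y = g i" using mem_lin_map_dga_mapE[OF f(1) e height V(1) y] by blast
    then show ?thesis using V(2) by (simp add: homog_def)
  qed
  then show "homog g k (lin_map f e V)" by (simp add: homog_def)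
next
  fix V assume "V \<subseteq> {..<n}"
  moreover have "finite (d i) \<and> \<not> aug e (d i)" if "i < n" for i
    using d e that unfolding augmentation_def by blast
  ultimately show "lin_map f e (lin_diff d (\<lambda>x. aug e (f x)) V) = lin_diff d e (lin_map f e V)"
    using lin_map_chain[OF f d] by blast
qed

section \<open>Elementary automorphisms\<close>

lemma elem_map_other: "i \<noteq> j \<Longrightarrow> elem_map j u i = {[i]}"
  by (simp add: elem_map_def)

lemma finite_elem_map: "finite u \<Longrightarrow> finite (elem_map j u i)"
  by (simp add: elem_map_def)

text \<open>Since \<open>u\<close> does not involve \<open>q\<^sub>j\<close>, the automorphism fixes \<open>u\<close> and maps
  \<open>q\<^sub>j + u\<close> to \<open>q\<^sub>j + u + u = q\<^sub>j\<close>.\<close>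

lemma eval_elem_map_elem_map:
  assumes u: "finite u" "\<And>w. w \<in> u \<Longrightarrow> j \<notin> set w"
  shows "eval (elem_map j u) (elem_map j u i) = {[i]}"
proof (cases "i = j")
  case True
  have "eval (elem_map j u) u = u"
    using u(2) by (intro eval_fixed) (auto simp: elem_map_def)
  then have "eval (elem_map j u) (zadd {[j]} u) = zadd (zadd {[j]} u) u"
    using u(1) by (simp add: eval_zadd eval_singleton finite_elem_map elem_map_def)
  then show ?thesis using True by (simp add: elem_map_def zadd_assoc)
next
  case False
  then show ?thesis by (simp add: elem_map_other eval_singleton)
qed

lemma aug_elem_map_involution:
  assumes "finite u" "\<And>w. w \<in> u \<Longrightarrow> j \<notin> set w"
  shows "(\<lambda>x. aug (\<lambda>y. aug e (elem_map j u y)) (elem_map j u x)) = e"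
proof
  fix x
  have "aug (\<lambda>y. aug e (elem_map j u y)) (elem_map j u x) = aug e (eval (elem_map j u) (elem_map j u x))"
    using assms(1) by (intro aug_eval[symmetric] finite_elem_map)
  then show "aug (\<lambda>y. aug e (elem_map j u y)) (elem_map j u x) = e x"
    by (simp add: eval_elem_map_elem_map[OF assms])
qed

lemma elem_map_height_le:
  assumes "semimonotonic h j u" "w \<in> elem_map j u i" "x \<in> set w"
  shows "h x \<le> h i"
proof (cases "i = j")
  case True
  then have "w = [j] \<or> w \<in> u" using assms(2) by (auto simp: elem_map_def zadd_def)
  then show ?thesis using assms True unfolding semimonotonic_def by fastforce
next
  case False
  then show ?thesis using assms(2,3) by (simp add: elem_map_other)
qed

lemma elem_autD:
  assumes "elem_aut n g d j u"
  shows "finite u" "\<And>w. w \<in> u \<Longrightarrow> j \<notin> set w" "dga_map n g d g d (elem_map j u)"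
  using assms unfolding elem_aut_def by auto

lemma augmentation_elem_map:
  assumes el: "elem_aut n g d j u" and d: "\<And>i. i < n \<Longrightarrow> finite (d i)"
    and e1: "augmentation n g d (\<lambda>x. aug e (elem_map j u x))"
  shows "augmentation n g d e"
proof -
  note u = elem_autD[OF el]
  have "augmentation n g d (\<lambda>x. aug (\<lambda>y. aug e (elem_map j u y)) (elem_map j u x))"
    using u(3) finite_elem_map[OF u(1)] d d e1 by (rule augmentation_pullback)
  then show ?thesis by (simp only: aug_elem_map_involution[OF u(1,2)])
qed

lemma elem_map_filtered_chain_iso:
  assumes el: "elem_aut n g d j u" and sm: "semimonotonic h j u" and d: "\<And>i. i < n \<Longrightarrow> finite (d i)"
    and e: "augmentation n g d e" and e1: "augmentation n g d (\<lambda>x. aug e (elem_map j u x))"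
  shows "filtered_chain_iso n g h (lin_diff d (\<lambda>x. aug e (elem_map j u x))) (lin_diff d e)
      (lin_map (elem_map j u) e)"
proof -
  let ?E = "elem_map j u"
  let ?e1 = "\<lambda>x. aug e (?E x)"
  note u = elem_autD(1,2)[OF el] and dga = elem_autD(3)[OF el]
  have fin: "\<And>x. finite (?E x)" using u(1) by (rule finite_elem_map)
  have invol: "(\<lambda>x. aug ?e1 (?E x)) = e" using u by (rule aug_elem_map_involution)
  have height: "\<forall>i<n. \<forall>w\<in>?E i. \<forall>x\<in>set w. h x \<le> h i"
    using sm by (blast intro: elem_map_height_le)
  have "filtered_chain_map n g h (lin_diff d ?e1) (lin_diff d e) (lin_map ?E e)"
    using dga fin d e height by (rule lin_map_filtered_chain_map)
  moreover have "filtered_chain_map n g h (lin_diff d e) (lin_diff d ?e1) (lin_map ?E ?e1)"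
    using lin_map_filtered_chain_map[OF dga fin d e1 height] by (simp only: invol)
  moreover have "lin_map ?E ?e1 (lin_map ?E e V) = V" "lin_map ?E e (lin_map ?E ?e1 V) = V"
    if "V \<subseteq> {..<n}" for V
  proof -
    have "finite V" using that finite_subset by blast
    then have "lin_map ?E e' (lin_map ?E (\<lambda>x. aug e' (?E x)) V) = V" for e'
      using fin by (rule lin_map_left_inverse) (simp_all add: fin eval_elem_map_elem_map[OF u])
    from this[of ?e1] this[of e] show "lin_map ?E ?e1 (lin_map ?E e V) = V" "lin_map ?E e (lin_map ?E ?e1 V) = V"
      by (simp_all only: invol)
  qed
  ultimately show ?thesis unfolding filtered_chain_iso_def by blast
qed

lemma compose_elem_Nil: "compose_elem [] = gen"
  by (simp add: compose_elem_def)

lemma compose_elem_Cons: "compose_elem ((j, u) # fs) = comp (elem_map j u) (compose_elem fs)"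
  by (simp add: compose_elem_def)

lemma finite_compose_elem: "\<forall>(j, u)\<in>set fs. finite u \<Longrightarrow> finite (compose_elem fs x)"
  by (induction fs arbitrary: x)
    (auto simp: compose_elem_Nil compose_elem_Cons gen_def Defs.comp_def finite_eval finite_elem_map)

lemma compose_elem_fixed: "\<forall>(j, u)\<in>set fs. finite u \<and> j \<noteq> x \<Longrightarrow> compose_elem fs x = {[x]}"
  by (induction fs)
    (auto simp: compose_elem_Nil compose_elem_Cons gen_def Defs.comp_def eval_singleton
      finite_elem_map elem_map_other)

lemma aug_compose_elem_Cons:
  "\<forall>(j, u)\<in>set ((j, u) # fs). finite u \<Longrightarrow>
    aug e (compose_elem ((j, u) # fs) x) = aug (\<lambda>y. aug e (elem_map j u y)) (compose_elem fs x)"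
  by (simp add: compose_elem_Cons Defs.comp_def aug_eval finite_compose_elem finite_elem_map)

lemma augmentation_compose_elem:
  assumes "\<forall>(j, u)\<in>set fs. elem_aut n g d j u" "augmentation n g d (\<lambda>x. aug e (compose_elem fs x))"
    and d: "\<And>i. i < n \<Longrightarrow> finite (d i)"
  shows "augmentation n g d e"
  using assms(1,2)
proof (induction fs arbitrary: e)
  case Nil
  then show ?case by (simp add: compose_elem_Nil gen_def)
next
  case (Cons p fs)
  obtain j u where p: "p = (j, u)" by fastforce
  have el: "elem_aut n g d j u" and fins: "\<forall>(j, u)\<in>set (p # fs). finite u"
    using Cons.prems(1) p by (auto simp: elem_aut_def)
  have "augmentation n g d (\<lambda>x. aug (\<lambda>y. aug e (elem_map j u y)) (compose_elem fs x))"
    using Cons.prems(2) fins by (simp add: p aug_compose_elem_Cons)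
  then have "augmentation n g d (\<lambda>x. aug e (elem_map j u x))"
    using Cons.IH Cons.prems(1) by simp
  then show ?case using augmentation_elem_map[OF el d] by blast
qed

lemma lin_map_compose_elem_zadd:
  assumes "\<forall>(j, u)\<in>set fs. j < n \<and> finite u"
  shows "lin_map (compose_elem fs) e (zadd V W) =
    zadd (lin_map (compose_elem fs) e V) (lin_map (compose_elem fs) e W)"
  using assms by (intro lin_map_zadd_fixing_beyond[of n] compose_elem_fixed) auto

lemma compose_elem_filtered_chain_iso:
  assumes A: "filtered_ce_dga n g h d"
    and "\<forall>(j, u)\<in>set fs. elem_aut n g d j u \<and> semimonotonic h j u"
    and "augmentation n g d (\<lambda>x. aug e (compose_elem fs x))"
  shows "filtered_chain_iso n g h (lin_diff d (\<lambda>x. aug e (compose_elem fs x))) (lin_diff d e)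
      (lin_map (compose_elem fs) e)"
  using assms(2,3)
proof (induction fs arbitrary: e)
  case Nil
  have "\<And>x. aug e (compose_elem [] x) = e x" by (simp add: compose_elem_Nil gen_def)
  moreover have "lin_map (compose_elem []) e = id" by (simp add: compose_elem_Nil lin_map_gen)
  ultimately show ?case by (simp only: filtered_chain_iso_id)
next
  case (Cons p fs)
  obtain j u where p: "p = (j, u)" by fastforce
  let ?e1 = "\<lambda>x. aug e (elem_map j u x)"
  note d = filtered_ce_dgaD(1)[OF A] and letters = filtered_ce_dgaD(2)[OF A]
  have el: "elem_aut n g d j u" "semimonotonic h j u" and fins: "\<forall>(j, u)\<in>set (p # fs). finite u"
    using Cons.prems(1) p by (auto simp: elem_aut_def)
  have aug_eq: "(\<lambda>x. aug e (compose_elem (p # fs) x)) = (\<lambda>x. aug ?e1 (compose_elem fs x))"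
    using fins by (simp add: p aug_compose_elem_Cons)
  have "\<forall>(j, u)\<in>set fs. elem_aut n g d j u" using Cons.prems(1) by auto
  moreover have "augmentation n g d (\<lambda>x. aug ?e1 (compose_elem fs x))"
    using Cons.prems(2) aug_eq by simp
  ultimately have e1: "augmentation n g d ?e1" using d by (rule augmentation_compose_elem)
  have "filtered_chain_iso n g h (lin_diff d ?e1) (lin_diff d e) (lin_map (elem_map j u) e)"
    using el d augmentation_elem_map[OF el(1) d e1] e1 by (rule elem_map_filtered_chain_iso)
  moreover have "filtered_chain_iso n g h (lin_diff d (\<lambda>x. aug ?e1 (compose_elem fs x)))
      (lin_diff d ?e1) (lin_map (compose_elem fs) ?e1)"
    using Cons.IH Cons.prems aug_eq by auto
  ultimately have "filtered_chain_iso n g h (lin_diff d (\<lambda>x. aug ?e1 (compose_elem fs x))) (lin_diff d e)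
      (lin_map (elem_map j u) e \<circ> lin_map (compose_elem fs) ?e1)"
    by (rule filtered_chain_iso_comp)
  then show ?case
  proof (rule filtered_chain_iso_cong)
    fix V :: "nat set" assume V: "V \<subseteq> {..<n}"
    then show "lin_map (compose_elem (p # fs)) e V =
        (lin_map (elem_map j u) e \<circ> lin_map (compose_elem fs) ?e1) V"
      using fins finite_subset[OF V]
      by (simp add: p compose_elem_Cons lin_map_comp finite_elem_map finite_compose_elem)
  qed (simp_all add: aug_eq lin_diff_subset[OF letters])
qed

lemma semimonotonic_lin_map_filtered_chain_iso:
  assumes A: "filtered_ce_dga n g h d" and A': "filtered_ce_dga n g' h' d'"
    and elem: "\<forall>(j, u) \<in> set fs. elem_aut n g d j u \<and> semimonotonic h j u"
    and sigma: "dga_map n g d g' d' gen"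
    and eps: "augmentation n g d e"
    and eps': "\<forall>i<n. aug e' (comp gen (compose_elem fs) i) = e i"
  shows "filtered_chain_iso n g h (lin_diff d e) (lin_diff d' e') (lin_map (comp gen (compose_elem fs)) e')"
proof -
  let ?P = "compose_elem fs"
  note letters = filtered_ce_dgaD(2)[OF A]
  have d': "\<And>i. i < n \<Longrightarrow> d' i = d i"
    using dga_map_gen_eq(2)[OF sigma] filtered_ce_dgaD(1)[OF A'] by blast
  have e'_P: "\<And>i. i < n \<Longrightarrow> aug e' (?P i) = e i" using eps' by (simp add: comp_gen_left)
  have "augmentation n g d (\<lambda>x. aug e' (?P x))"
    using eps augmentation_cong[OF letters e'_P] by simp
  then have "filtered_chain_iso n g h (lin_diff d (\<lambda>x. aug e' (?P x))) (lin_diff d e') (lin_map ?P e')"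
    by (rule compose_elem_filtered_chain_iso[OF A elem])
  then show ?thesis
  proof (rule filtered_chain_iso_cong)
    fix V :: "nat set" assume V: "V \<subseteq> {..<n}"
    show "lin_diff d e V = lin_diff d (\<lambda>x. aug e' (?P x)) V"
      by (rule lin_diff_cong_generators[OF letters V]) (simp_all add: e'_P)
    show "lin_diff d' e' V = lin_diff d e' V"
      by (rule lin_diff_cong_generators[OF letters V]) (simp_all add: d')
  qed (simp_all add: comp_gen_left lin_diff_subset[OF letters])
qed

theorem proposition4p4:
  fixes n :: nat
    and g g' :: "nat \<Rightarrow> int"
    and h h' :: "nat \<Rightarrow> real"
    and d d' :: "nat \<Rightarrow> elt"
    and fs :: "(nat \<times> elt) list"
    and e e' :: "nat \<Rightarrow> bool"
    and \<delta> :: real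
  assumes A: "filtered_ce_dga n g h d"
    and A': "filtered_ce_dga n g' h' d'"
    and elem: "\<forall>(j, u) \<in> set fs. elem_aut n g d j u \<and> semimonotonic h j u"
    and sigma: "dga_map n g d g' d' gen"
    and delta: "\<forall>i<n. \<bar>h' i - h i\<bar> \<le> \<delta>"
    and eps: "augmentation n g d e"
    and eps': "\<forall>i<n. aug e' (comp gen (compose_elem fs) i) = e i"
  shows "induces_interleaving n g h (lin_diff d e) g' h' (lin_diff d' e') \<delta>
           (lin_map (comp gen (compose_elem fs)) e')"
proof (rule filtered_chain_iso_induces_interleaving)
  show "filtered_chain_iso n g h (lin_diff d e) (lin_diff d' e') (lin_map (comp gen (compose_elem fs)) e')"
    using A A' elem sigma eps eps' by (rule semimonotonic_lin_map_filtered_chain_iso)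
  have "\<forall>(j, u)\<in>set fs. j < n \<and> finite u" using elem by (auto simp: elem_aut_def)
  then show "lin_map (comp gen (compose_elem fs)) e' (zadd V W) =
      zadd (lin_map (comp gen (compose_elem fs)) e' V) (lin_map (comp gen (compose_elem fs)) e' W)" for V W
    by (simp add: comp_gen_left lin_map_compose_elem_zadd)
  show "\<forall>i<n. g' i = g i"
    using dga_map_gen_eq(1)[OF sigma] filtered_ce_dgaD(1)[OF A'] by blast
qed (simp_all add: delta lin_diff_def linext_def)

end
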